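(* Consider binary classification on $\mathcal{X}=\{x\in\mathbb{R}^2:\|x\|\le1\}$ with $x$ uniformly distributed on $\mathcal{X}$ and hypothesis class $\mathcal{H}=\{h_w: h_w(x)=\mathrm{sgn}(x^{\top}w),\ w\in\mathbb{R}^2\}$. Let $g=h_v\in\mathcal{H}$ have parameter $v$, and let $h=h_w$ be sampled with $w\sim\mathcal{N}(v,\sigma^2 I)$. Then for $x_1,x_2\in\mathcal{X}$, $$L(g,x_1)<L(g,x_2)\iff \mathbb{P}[h(x_1)\neq g(x_1)]>\mathbb{P}[h(x_2)\neq g(x_2)].$$
   Context: For $h_1,h_2\in\mathcal{H}$, $\rho(h_1,h_2)=\mathbb{P}_X[h_1(X)\neq h_2(X)]$ with $X$ uniform on $\mathcal{X}$. The least disagree metric is $L(g,x)=\inf_{h\in\mathcal{H}:\,h(x)\neq g(x)}\rho(h,g)$. The probabilities $\mathbb{P}[h(x_k)\neq g(x_k)]$ are over $w\sim\mathcal{N}(v,\sigma^2I)$. *)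

theory Defs
  imports "HOL-Analysis.Analysis" "HOL-Probability.Probability"
begin

definition disk :: "(real^2) set" where
  "disk = cball 0 1"

definition unif_disk :: "(real^2) measure" where
  "unif_disk = uniform_measure lborel disk"

definition hyp :: "real^2 \<Rightarrow> (real^2 \<Rightarrow> real)" where
  "hyp w = (\<lambda>x. sgn (x \<bullet> w))"

definition Hclass :: "(real^2 \<Rightarrow> real) set" where
  "Hclass = range hyp"

definition rho :: "(real^2 \<Rightarrow> real) \<Rightarrow> (real^2 \<Rightarrow> real) \<Rightarrow> real" where
  "rho h1 h2 = measure unif_disk {x \<in> disk. h1 x \<noteq> h2 x}"

text \<open>Least disagree metric; infimum taken in the extended reals (inf of empty set = \<infinity>).\<close>
definition LDM :: "(real^2 \<Rightarrow> real) \<Rightarrow> real^2 \<Rightarrow> ereal" where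
  "LDM g x = (INF h \<in> {h \<in> Hclass. h x \<noteq> g x}. ereal (rho h g))"

definition gauss2 :: "real^2 \<Rightarrow> real \<Rightarrow> (real^2) measure" where
  "gauss2 v \<sigma> = density lborel (\<lambda>w. ennreal (\<Prod>i\<in>UNIV. normal_density (v $ i) \<sigma> (w $ i)))"

definition mis_prob :: "real^2 \<Rightarrow> real \<Rightarrow> real^2 \<Rightarrow> real" where
  "mis_prob v \<sigma> x = measure (gauss2 v \<sigma>) {w. hyp w x \<noteq> hyp v x}"

end

theory Submission
  imports Defs
begin

text \<open>
  At x = 0 no classifier disagrees with h_v, so L = \<infinity> and the probability is 0. For x \<noteq> 0 both
  sides depend on x only through the alignment |x \<bullet> v| / |x|, and both orders are the order of
  this quantity.

  The uniform distribution on the disk is invariant under orthogonal maps, so for unit w the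
  disagreement \<rho>(h_w, h_v) depends only on w \<bullet> v (a reflection exchanges two unit vectors with
  the same inner product with v); comparing the double wedges on which h_w and h_v differ shows
  that it strictly decreases in w \<bullet> v. Hence L(h_v, x) is attained at the unit vector orthogonal
  to x closest to v, whose inner product with v is sqrt(|v|^2 - (|x \<bullet> v| / |x|)^2); if x is
  orthogonal to v the infimum is not attained but lies below all of these values.

  N(v, \<sigma>^2 I) is invariant under rotations about v, so P[h(x) \<noteq> g(x)] = P[u \<bullet> w \<le> 0] with
  u = \<plusminus>x / |x| depends only on u \<bullet> v = |x \<bullet> v| / |x| and strictly decreases in it; it equals 1
  if x is orthogonal to v.
\<close>

section \<open>Orthonormal frames and reflections\<close>

definition perp :: "real^2 \<Rightarrow> real^2" where
  "perp x = (\<chi> i. if i = 1 then - x$2 else x$1)"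

lemma inner_real2: "(x::real^2) \<bullet> y = x$1 * y$1 + x$2 * y$2"
  by (simp add: inner_vec_def sum_2)

lemma inner_perp_self [simp]: "x \<bullet> perp x = 0" "perp x \<bullet> x = 0"
  by (simp_all add: inner_real2 perp_def)

lemma norm_perp [simp]: "norm (perp x) = norm x"
  by (simp add: norm_eq_sqrt_inner inner_real2 perp_def algebra_simps)

lemma vector_decompose_perp:
  assumes "norm e = 1"
  shows "x = (x \<bullet> e) *\<^sub>R e + (x \<bullet> perp e) *\<^sub>R perp e"
proof -
  have "e$1 * e$1 + e$2 * e$2 = 1"
    using assms by (simp add: norm_eq_1 inner_real2)
  then show ?thesis
    by (simp add: vec_eq_iff forall_2 inner_real2 perp_def) algebra
qed

lemma inner_decompose_perp:
  assumes "norm e = 1"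
  shows "x \<bullet> y = (x \<bullet> e) * (y \<bullet> e) + (x \<bullet> perp e) * (y \<bullet> perp e)"
proof -
  have "x \<bullet> y = x \<bullet> ((y \<bullet> e) *\<^sub>R e + (y \<bullet> perp e) *\<^sub>R perp e)"
    by (rule arg_cong[where f = "(\<bullet>) x"]) (rule vector_decompose_perp[OF assms])
  then show ?thesis
    by (simp add: inner_add_right mult.commute)
qed

lemma norm_decompose_perp:
  assumes "norm e = 1"
  shows "(norm x)\<^sup>2 = (x \<bullet> e)\<^sup>2 + (x \<bullet> perp e)\<^sup>2"
  using inner_decompose_perp[OF assms, of x x] unfolding power2_norm_eq_inner by (simp add: power2_eq_square)

definition reflection :: "'a::real_inner \<Rightarrow> 'a \<Rightarrow> 'a" where
  "reflection n x = x - (2 * (x \<bullet> n) / (n \<bullet> n)) *\<^sub>R n"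

lemma orthogonal_transformation_reflection: "orthogonal_transformation (reflection n)"
  unfolding orthogonal_transformation_def reflection_def
  by (auto intro!: linearI simp: algebra_simps inner_add_left inner_diff_left inner_diff_right
      inner_commute add_divide_distrib scaleR_add_left)

lemma reflection_orthogonal: "x \<bullet> n = 0 \<Longrightarrow> reflection n x = x"
  by (simp add: reflection_def)

lemma reflection_diff:
  assumes "norm a = norm b"
  shows "reflection (a - b) a = b"
proof (cases "a = b")
  case False
  have "a \<bullet> a = b \<bullet> b"
    using assms by (simp add: dot_square_norm)
  then have "(a - b) \<bullet> (a - b) = 2 * (a \<bullet> (a - b))"
    by (simp add: inner_diff_left inner_diff_right inner_commute)
  moreover have "(a - b) \<bullet> (a - b) \<noteq> 0"
    using False by simp
  ultimately show ?thesis
    by (simp add: reflection_def)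
qed (simp add: reflection_def)

section \<open>Lebesgue measure under orthogonal transformations\<close>

lemma orthogonal_transformation_borel_measurable:
  fixes f :: "'a::euclidean_space \<Rightarrow> 'a"
  assumes "orthogonal_transformation f"
  shows "f \<in> borel_measurable borel"
proof -
  have "bounded_linear f"
    using orthogonal_transformation_linear[OF assms] by (simp add: linear_conv_bounded_linear)
  then show ?thesis
    by (intro borel_measurable_continuous_onI linear_continuous_on)
qed

lemma lborel_distr_orthogonal_transformation:
  fixes f :: "real^'n::{finite,wellorder} \<Rightarrow> real^'n::_"
  assumes f: "orthogonal_transformation f"
  shows "distr lborel borel f = lborel"
proof (rule lborel_eqI[symmetric])
  have f_borel: "f \<in> borel_measurable borel"
    using f by (rule orthogonal_transformation_borel_measurable)
  fix l u :: "real^'n::{finite,wellorder}"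
  assume lu: "\<And>b. b \<in> Basis \<Longrightarrow> l \<bullet> b \<le> u \<bullet> b"
  define g where "g = inv f"
  have g: "orthogonal_transformation g"
    unfolding g_def using f by (rule orthogonal_transformation_inv)
  have g_box: "g ` box l u = f -` box l u"
    unfolding g_def using orthogonal_transformation_bij[OF f] by (simp add: bij_vimage_eq_inv_image)
  have box: "box l u \<in> lmeasurable"
    by simp
  have "emeasure (distr lborel borel f) (box l u) = emeasure lborel (g ` box l u)"
    using f_borel g_box by (simp add: emeasure_distr)
  also have "\<dots> = emeasure lebesgue (g ` box l u)"
    using measurable_sets_borel[OF f_borel, of "box l u"] g_box by simp
  also have "\<dots> = measure lebesgue (g ` box l u)"
    using measurable_orthogonal_image[OF g box] by (simp add: emeasure_eq_measure2)
  also have "\<dots> = measure lebesgue (box l u)"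
    using measure_orthogonal_image[OF g box] by simp
  also have "\<dots> = emeasure lborel (box l u)"
    using box by (simp add: emeasure_eq_measure2)
  also have "\<dots> = (\<Prod>b\<in>Basis. (u - l) \<bullet> b)"
    using lu by (rule emeasure_lborel_box)
  finally show "emeasure (distr lborel borel f) (box l u) = (\<Prod>b\<in>Basis. (u - l) \<bullet> b)" .
qed simp

lemma hyperplane_null_sets_lborel:
  fixes a :: "'a::euclidean_space"
  assumes "a \<noteq> 0"
  shows "{x. x \<bullet> a = 0} \<in> null_sets lborel"
proof -
  have "negligible {x. a \<bullet> x = 0}"
    using negligible_hyperplane assms by blast
  then show ?thesis
    by (simp add: negligible_iff_null_sets inner_commute null_sets_completion_iff)
qed

lemma open_not_null_sets_lborel:
  fixes U :: "'a::euclidean_space set"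
  assumes "open U" "U \<noteq> {}"
  shows "U \<notin> null_sets lborel"
  using open_not_negligible[OF assms] assms(1)
  by (simp add: negligible_iff_null_sets null_sets_completion_iff)

section \<open>The disagreement metric\<close>

lemma disk_borel [measurable]: "disk \<in> sets borel"
  by (simp add: disk_def)

lemma emeasure_disk: "emeasure lborel disk \<noteq> 0" "emeasure lborel disk \<noteq> \<infinity>"
proof -
  have "ball 0 1 \<notin> null_sets lborel"
    by (rule open_not_null_sets_lborel) auto
  moreover have "ball 0 1 \<subseteq> disk"
    by (auto simp: disk_def)
  ultimately show "emeasure lborel disk \<noteq> 0"
    using null_sets_subset[of disk lborel "ball 0 1"] by (auto simp: null_sets_def)
  show "emeasure lborel disk \<noteq> \<infinity>"
    using emeasure_lborel_cball_finite[of 0 1] by (simp add: disk_def less_top)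
qed

lemma prob_space_unif_disk: "prob_space unif_disk"
  unfolding unif_disk_def by (rule prob_space_uniform_measure[OF emeasure_disk])

lemma sets_unif_disk [simp, measurable_cong]: "sets unif_disk = sets borel"
  by (simp add: unif_disk_def)

lemma space_unif_disk: "space unif_disk = UNIV"
  by (simp add: unif_disk_def)

lemma emeasure_unif_disk:
  "A \<in> sets borel \<Longrightarrow> emeasure unif_disk A = emeasure lborel (disk \<inter> A) / emeasure lborel disk"
  by (simp add: unif_disk_def)

lemma unif_disk_null_sets: "N \<in> null_sets lborel \<Longrightarrow> N \<in> null_sets unif_disk"
  using null_sets_subset[of N lborel "disk \<inter> N"] by (auto simp: null_sets_def emeasure_unif_disk)

lemma measure_unif_disk_open_pos:
  assumes "open U" "U \<noteq> {}" "U \<subseteq> disk"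
  shows "0 < measure unif_disk U"
proof -
  interpret prob_space unif_disk
    by (rule prob_space_unif_disk)
  have "emeasure lborel U \<noteq> 0"
    using open_not_null_sets_lborel[OF assms(1,2)] assms(1) by (simp add: null_sets_def)
  then have "emeasure unif_disk U \<noteq> 0"
    using assms emeasure_disk by (simp add: emeasure_unif_disk Int_absorb1 ennreal_divide_eq_0_iff)
  then show ?thesis
    using assms(1) by (simp add: emeasure_eq_measure measure_nonneg order.not_eq_order_implies_strict)
qed

lemma distr_unif_disk_orthogonal_transformation:
  assumes f: "orthogonal_transformation f"
  shows "distr unif_disk borel f = unif_disk"
proof (rule measure_eqI)
  have f_borel: "f \<in> borel_measurable borel"
    using f by (rule orthogonal_transformation_borel_measurable)
  fix A :: "(real^2) set"
  assume "A \<in> sets (distr unif_disk borel f)"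
  then have A: "A \<in> sets borel"
    by simp
  have "disk \<inter> f -` A = f -` (disk \<inter> A)"
    using f by (auto simp: disk_def orthogonal_transformation_norm)
  then have "emeasure lborel (disk \<inter> f -` A) = emeasure (distr lborel borel f) (disk \<inter> A)"
    using f_borel A by (simp add: emeasure_distr)
  then show "emeasure (distr unif_disk borel f) A = emeasure unif_disk A"
    using f_borel A measurable_sets_borel[OF f_borel A]
    by (simp add: emeasure_distr emeasure_unif_disk lborel_distr_orthogonal_transformation[OF f])
qed simp

lemma rho_hyp: "rho (hyp a) (hyp b) = measure unif_disk {x. sgn (x \<bullet> a) \<noteq> sgn (x \<bullet> b)}"
proof -
  have "{x. sgn (x \<bullet> a) \<noteq> sgn (x \<bullet> b)} \<in> sets borel"
    by measurable
  then have "emeasure unif_disk {x \<in> disk. hyp a x \<noteq> hyp b x}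
      = emeasure unif_disk {x. sgn (x \<bullet> a) \<noteq> sgn (x \<bullet> b)}"
    by (simp add: emeasure_unif_disk hyp_def Int_def conj_commute)
  then show ?thesis
    by (simp add: rho_def measure_def)
qed

lemma hyp_scaleR: "0 < c \<Longrightarrow> hyp (c *\<^sub>R w) = hyp w"
  by (simp add: hyp_def sgn_mult)

lemma hyp_sgn: "hyp (sgn v) = hyp v"
  by (cases "v = 0") (simp_all add: sgn_div_norm hyp_scaleR)

lemma rho_hyp_le_1: "rho (hyp a) (hyp b) \<le> 1"
  unfolding rho_hyp using prob_space_unif_disk by (rule prob_space.prob_le_1)

lemma rho_hyp_zero:
  assumes "a \<noteq> 0"
  shows "rho (hyp a) (hyp 0) = 1" "rho (hyp 0) (hyp a) = 1"
proof -
  interpret prob_space unif_disk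
    by (rule prob_space_unif_disk)
  have "{x. sgn (x \<bullet> a) \<noteq> sgn (x \<bullet> 0)} = space unif_disk - {x. x \<bullet> a = 0}"
    by (auto simp: sgn_eq_0_iff space_unif_disk)
  moreover have "{x. x \<bullet> a = 0} \<in> null_sets unif_disk"
    using assms by (intro unif_disk_null_sets hyperplane_null_sets_lborel)
  ultimately have "measure unif_disk {x. sgn (x \<bullet> a) \<noteq> sgn (x \<bullet> 0)} = 1"
    using measure_Diff_null_set[of "space unif_disk" unif_disk "{x. x \<bullet> a = 0}"] prob_space
    by (simp only: sets.top)
  moreover have "{x. sgn (x \<bullet> 0) \<noteq> sgn (x \<bullet> a)} = {x. sgn (x \<bullet> a) \<noteq> sgn (x \<bullet> 0)}"
    by auto
  ultimately show "rho (hyp a) (hyp 0) = 1" "rho (hyp 0) (hyp a) = 1"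
    by (simp_all only: rho_hyp)
qed

lemma rho_hyp_orthogonal_transformation:
  assumes f: "orthogonal_transformation f"
  shows "rho (hyp (f a)) (hyp (f b)) = rho (hyp a) (hyp b)"
proof -
  define S where "S = {x. sgn (x \<bullet> f a) \<noteq> sgn (x \<bullet> f b)}"
  have S: "S \<in> sets borel"
    unfolding S_def by measurable
  have "unif_disk \<rightarrow>\<^sub>M borel = borel \<rightarrow>\<^sub>M (borel :: (real^2) measure)"
    by (rule measurable_cong_sets) simp_all
  then have f_meas: "f \<in> unif_disk \<rightarrow>\<^sub>M borel"
    using orthogonal_transformation_borel_measurable[OF f] by simp
  have "measure unif_disk (f -` S) = measure (distr unif_disk borel f) S"
    using measure_distr[OF f_meas S] by (simp add: space_unif_disk)
  also have "\<dots> = measure unif_disk S"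
    by (simp only: distr_unif_disk_orthogonal_transformation[OF f])
  finally have "measure unif_disk (f -` S) = measure unif_disk S" .
  moreover have "f -` S = {x. sgn (x \<bullet> a) \<noteq> sgn (x \<bullet> b)}"
    unfolding S_def using f by (simp add: orthogonal_transformation_def)
  ultimately show ?thesis
    by (simp add: rho_hyp S_def)
qed

lemma rho_hyp_eq_if_inner_eq:
  assumes "norm w1 = norm w2" "w1 \<bullet> v = w2 \<bullet> v"
  shows "rho (hyp w1) (hyp v) = rho (hyp w2) (hyp v)"
proof -
  define f where "f = reflection (w1 - w2)"
  have "f w1 = w2"
    unfolding f_def using assms(1) by (rule reflection_diff)
  moreover have "f v = v"
    unfolding f_def using assms(2) by (intro reflection_orthogonal) (simp add: inner_diff_right inner_commute)
  ultimately show ?thesis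
    using rho_hyp_orthogonal_transformation[OF orthogonal_transformation_reflection, of "w1 - w2" w1 v]
    by (simp add: f_def)
qed

text \<open>Writing c_i = cos t_i and s_i = sin t_i with t_i in [0, \<pi>], this says sin (t_1 - t_2) \<ge> 0.\<close>

lemma upper_semicircle_cross_le:
  fixes c1 s1 c2 s2 :: real
  assumes c: "c1 < c2" and s: "0 \<le> s1" "0 \<le> s2" and circle: "c1\<^sup>2 + s1\<^sup>2 = 1" "c2\<^sup>2 + s2\<^sup>2 = 1"
  shows "c1 * s2 \<le> c2 * s1"
proof -
  consider "c1 \<le> 0" "0 \<le> c2" | "0 < c1" | "c2 < 0"
    using c by linarith
  then show ?thesis
  proof cases
    case 1
    then show ?thesis
      using s mult_nonpos_nonneg[of c1 s2] mult_nonneg_nonneg[of c2 s1] by linarith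
  next
    case 2
    then have "c1\<^sup>2 < c2\<^sup>2"
      using c by (intro power_strict_mono) auto
    then have "s2\<^sup>2 \<le> s1\<^sup>2"
      using circle by linarith
    then have "s2 \<le> s1"
      using s(1) by (rule power2_le_imp_le)
    then show ?thesis
      using 2 c s by (intro mult_mono) auto
  next
    case 3
    then have "(- c2)\<^sup>2 < (- c1)\<^sup>2"
      using c by (intro power_strict_mono) auto
    then have "s1\<^sup>2 \<le> s2\<^sup>2"
      using circle by simp
    then have "s1 \<le> s2"
      using s(2) by (rule power2_le_imp_le)
    then have "c1 * s2 \<le> c1 * s1"
      using 3 c by (intro mult_left_mono_neg) auto
    also have "\<dots> \<le> c2 * s1"
      using c s by (intro mult_right_mono) auto
    finally show ?thesis .
  qed
qed

lemma upper_semicircle_halfplane_mono: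
  fixes a b c1 s1 c2 s2 :: real
  assumes c: "c1 < c2" and s: "0 \<le> s1" "0 \<le> s2" and circle: "c1\<^sup>2 + s1\<^sup>2 = 1" "c2\<^sup>2 + s2\<^sup>2 = 1"
    and a: "0 < a" and le: "a * c2 + b * s2 \<le> 0"
  shows "a * c1 + b * s1 \<le> 0"
proof -
  have "s2 \<noteq> 0"
  proof
    assume s2: "s2 = 0"
    have "c1\<^sup>2 \<le> 1"
      using circle(1) zero_le_power2[of s1] by linarith
    then have "\<bar>c1\<bar> \<le> 1"
      by (simp add: abs_square_le_1)
    then have "c2 = 1"
      using c circle(2) s2 by (auto simp: power2_eq_1_iff)
    then show False
      using a le s2 by simp
  qed
  then have s2_pos: "0 < s2"
    using s(2) by simp
  have "s2 * (a * c1 + b * s1) = a * (c1 * s2) + b * s1 * s2"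
    by (simp add: algebra_simps)
  also have "\<dots> \<le> a * (c2 * s1) + b * s1 * s2"
    using upper_semicircle_cross_le[OF c s circle] a by simp
  also have "\<dots> = s1 * (a * c2 + b * s2)"
    by (simp add: algebra_simps)
  also have "\<dots> \<le> 0"
    using s(1) le by (rule mult_nonneg_nonpos)
  finally show ?thesis
    using s2_pos by (simp add: mult_le_0_iff)
qed

lemma disagreement_subset:
  fixes e w1 w2 :: "real^2"
  assumes e: "norm e = 1" and w: "norm w1 = 1" "norm w2 = 1"
    and upper: "0 \<le> w1 \<bullet> perp e" "0 \<le> w2 \<bullet> perp e" and less: "w1 \<bullet> e < w2 \<bullet> e"
  shows "{x. sgn (x \<bullet> w2) \<noteq> sgn (x \<bullet> e)} \<subseteq> {x. sgn (x \<bullet> w1) \<noteq> sgn (x \<bullet> e)} \<union> {x. x \<bullet> e = 0}"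
proof -
  have circle: "(w \<bullet> e)\<^sup>2 + (w \<bullet> perp e)\<^sup>2 = 1" if "norm w = 1" for w
    using norm_decompose_perp[OF e, of w] that by simp
  have halfplane: "x \<bullet> w1 \<le> 0" if "0 < x \<bullet> e" "x \<bullet> w2 \<le> 0" for x
    using upper_semicircle_halfplane_mono[OF less upper circle[OF w(1)] circle[OF w(2)] that(1)]
      that(2) inner_decompose_perp[OF e, of x] by metis
  show ?thesis
  proof (intro subsetI)
    fix x
    assume x: "x \<in> {x. sgn (x \<bullet> w2) \<noteq> sgn (x \<bullet> e)}"
    consider "0 < x \<bullet> e" | "x \<bullet> e < 0" | "x \<bullet> e = 0"
      by linarith
    then show "x \<in> {x. sgn (x \<bullet> w1) \<noteq> sgn (x \<bullet> e)} \<union> {x. x \<bullet> e = 0}"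
    proof cases
      case 1
      then show ?thesis
        using x halfplane[of x] by (auto simp: sgn_real_def split: if_splits)
    next
      case 2
      then show ?thesis
        using x halfplane[of "- x"] by (auto simp: sgn_real_def split: if_splits)
    qed simp
  qed
qed

lemma rho_hyp_strict_mono_upper:
  fixes e w1 w2 :: "real^2"
  assumes e: "norm e = 1" and w: "norm w1 = 1" "norm w2 = 1"
    and upper: "0 \<le> w1 \<bullet> perp e" "0 \<le> w2 \<bullet> perp e" and less: "w1 \<bullet> e < w2 \<bullet> e"
  shows "rho (hyp w2) (hyp e) < rho (hyp w1) (hyp e)"
proof -
  interpret prob_space unif_disk
    by (rule prob_space_unif_disk)
  define D where "D w = {x. sgn (x \<bullet> w) \<noteq> sgn (x \<bullet> e)}" for w
  define U where "U = {x. norm x < 1 \<and> 0 < x \<bullet> e \<and> x \<bullet> w1 < 0 \<and> 0 < x \<bullet> w2}"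
  have D_borel: "D w \<in> sets borel" for w
    unfolding D_def by measurable
  have U_open: "open U"
    unfolding U_def by (intro open_Collect_conj open_Collect_less continuous_intros)
  have U_D: "U \<subseteq> D w1" "U \<inter> D w2 = {}"
    by (auto simp: U_def D_def sgn_real_def)
  have "w1 \<bullet> w2 < 1"
  proof -
    have "w1 \<noteq> w2"
      using less by auto
    then have "0 < (w1 - w2) \<bullet> (w1 - w2)"
      by simp
    moreover have "w1 \<bullet> w1 = 1" "w2 \<bullet> w2 = 1"
      using w by (simp_all add: dot_square_norm)
    ultimately show ?thesis
      by (simp add: inner_diff_left inner_diff_right inner_commute)
  qed
  then have "(1/4) *\<^sub>R (w2 - w1) \<in> U"
    using w less norm_triangle_ineq4[of w2 w1]
    by (simp add: U_def inner_diff_left inner_diff_right inner_commute dot_square_norm)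
  then have "U \<noteq> {}"
    by blast
  then have U_pos: "0 < measure unif_disk U"
    using U_open by (intro measure_unif_disk_open_pos) (auto simp: U_def disk_def)
  have "{x. x \<bullet> e = 0} \<in> null_sets unif_disk"
    using e by (intro unif_disk_null_sets hyperplane_null_sets_lborel) auto
  moreover have "D w2 \<subseteq> (D w1 - U) \<union> {x. x \<bullet> e = 0}"
    using disagreement_subset[OF e w upper less] U_D(2) unfolding D_def by blast
  ultimately have "measure unif_disk (D w2) \<le> measure unif_disk (D w1 - U)"
    using D_borel U_open
    by (intro finite_measure_mono_AE) (auto elim!: AE_not_in[THEN eventually_mono])
  also have "\<dots> = measure unif_disk (D w1) - measure unif_disk U"
    using D_borel U_open U_D(1) by (intro finite_measure_Diff) auto
  finally show ?thesis
    using U_pos by (simp add: rho_hyp D_def)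
qed

lemma rho_hyp_strict_mono:
  assumes w: "norm w1 = 1" "norm w2 = 1" and less: "w1 \<bullet> v < w2 \<bullet> v"
  shows "rho (hyp w2) (hyp v) < rho (hyp w1) (hyp v)"
proof -
  define e where "e = sgn v"
  define flip where "flip w = (w \<bullet> e) *\<^sub>R e + \<bar>w \<bullet> perp e\<bar> *\<^sub>R perp e" for w
  have "v \<noteq> 0"
    using less by auto
  then have e: "norm e = 1"
    by (simp add: e_def norm_sgn)
  have v: "v = norm v *\<^sub>R e"
    using \<open>v \<noteq> 0\<close> by (simp add: e_def sgn_div_norm)
  have flip_e: "flip w \<bullet> e = w \<bullet> e" and flip_perp: "flip w \<bullet> perp e = \<bar>w \<bullet> perp e\<bar>" for w
    using e by (simp_all add: flip_def inner_add_left dot_square_norm)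
  then have flip_upper: "0 \<le> flip w \<bullet> perp e" for w
    by simp
  have flip_norm: "norm (flip w) = norm w" for w
  proof -
    have "(norm (flip w))\<^sup>2 = (norm w)\<^sup>2"
      using norm_decompose_perp[OF e, of w] norm_decompose_perp[OF e, of "flip w"]
      by (simp add: flip_e flip_perp)
    then show ?thesis
      by (simp add: power2_eq_iff_nonneg)
  qed
  have rho_flip: "rho (hyp w) (hyp v) = rho (hyp (flip w)) (hyp e)" for w
  proof -
    have "w \<bullet> v = flip w \<bullet> v"
      by (subst (1 2) v) (simp add: flip_e)
    then show ?thesis
      using rho_hyp_eq_if_inner_eq[of w "flip w" v] flip_norm by (simp add: e_def hyp_sgn)
  qed
  have "flip w1 \<bullet> e < flip w2 \<bullet> e"
    using less \<open>v \<noteq> 0\<close> by (subst (asm) (1 2) v) (simp add: flip_e)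
  then show ?thesis
    using rho_hyp_strict_mono_upper[OF e _ _ flip_upper flip_upper] w flip_norm by (simp add: rho_flip)
qed

lemma rho_hyp_less_iff:
  assumes "norm w1 = 1" "norm w2 = 1"
  shows "rho (hyp w1) (hyp v) < rho (hyp w2) (hyp v) \<longleftrightarrow> w2 \<bullet> v < w1 \<bullet> v"
proof -
  consider "w2 \<bullet> v < w1 \<bullet> v" | "w1 \<bullet> v = w2 \<bullet> v" | "w1 \<bullet> v < w2 \<bullet> v"
    by linarith
  then show ?thesis
  proof cases
    case 2
    then show ?thesis
      using rho_hyp_eq_if_inner_eq[of w1 w2 v] assms by simp
  qed (use rho_hyp_strict_mono assms in force)+
qed

section \<open>The Gaussian perturbation\<close>

lemma prod_normal_density_radial:
  fixes v w :: "real^'n"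
  shows "(\<Prod>i\<in>UNIV. normal_density (v $ i) \<sigma> (w $ i))
      = exp (- (norm (w - v))\<^sup>2 / (2 * \<sigma>\<^sup>2)) / sqrt (2 * pi * \<sigma>\<^sup>2) ^ CARD('n)"
proof -
  have "(norm (w - v))\<^sup>2 = (\<Sum>i\<in>UNIV. (w $ i - v $ i)\<^sup>2)"
    unfolding power2_norm_eq_inner by (simp add: inner_vec_def power2_eq_square)
  then show ?thesis
    by (simp add: normal_density_def prod.distrib exp_sum[symmetric] sum_divide_distrib[symmetric]
        sum_negf prod_dividef power_one_over)
qed

lemma gauss2_radial:
  "gauss2 v \<sigma> = density lborel (\<lambda>w. ennreal (exp (- (norm (w - v))\<^sup>2 / (2 * \<sigma>\<^sup>2)) / (2 * pi * \<sigma>\<^sup>2)))"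
  by (simp add: gauss2_def prod_normal_density_radial)

lemma prob_space_gauss2:
  assumes "0 < \<sigma>"
  shows "prob_space (gauss2 v \<sigma>)"
proof
  have Basis: "(Basis :: (real^2) set) = range (\<lambda>i. axis i 1)"
    by (auto simp: Basis_vec_def)
  have "inj (\<lambda>i::2. axis i (1::real))"
    by (simp add: inj_def axis_eq_axis)
  then have pdf: "ennreal (\<Prod>i\<in>UNIV. normal_density (v $ i) \<sigma> (w $ i))
      = (\<Prod>b\<in>Basis. ennreal (normal_density (v \<bullet> b) \<sigma> (w \<bullet> b)))" for w
    unfolding Basis by (simp add: prod.reindex prod_ennreal normal_density_nonneg cart_eq_inner_axis)
  have "emeasure (gauss2 v \<sigma>) (space (gauss2 v \<sigma>))
      = (\<integral>\<^sup>+ w. (\<Prod>b\<in>Basis. ennreal (normal_density (v \<bullet> b) \<sigma> (w \<bullet> b))) \<partial>lborel)"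
    unfolding gauss2_def
    by (simp add: emeasure_density pdf)
  also have "\<dots> = (\<Prod>b\<in>Basis. \<integral>\<^sup>+ y. ennreal (normal_density (v \<bullet> b) \<sigma> y) \<partial>lborel)"
    by (rule nn_integral_lborel_prod) auto
  also have "\<dots> = 1"
  proof (intro prod.neutral ballI)
    fix b :: "real^2"
    interpret prob_space "density lborel (normal_density (v \<bullet> b) \<sigma>)"
      using assms by (rule prob_space_normal_density)
    show "(\<integral>\<^sup>+ y. ennreal (normal_density (v \<bullet> b) \<sigma> y) \<partial>lborel) = 1"
      using emeasure_space_1 by (simp add: emeasure_density)
  qed
  finally show "emeasure (gauss2 v \<sigma>) (space (gauss2 v \<sigma>)) = 1" .
qed

lemma sets_gauss2 [measurable_cong]: "sets (gauss2 v \<sigma>) = sets borel"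
  and space_gauss2: "space (gauss2 v \<sigma>) = UNIV"
  by (simp_all add: gauss2_def)

lemma gauss2_null_sets: "N \<in> null_sets lborel \<Longrightarrow> N \<in> null_sets (gauss2 v \<sigma>)"
  unfolding gauss2_def
  by (subst null_sets_density_iff) (auto intro: AE_not_in[THEN eventually_mono])

lemma measure_gauss2_open_pos:
  assumes "0 < \<sigma>" "open U" "U \<noteq> {}"
  shows "0 < measure (gauss2 v \<sigma>) U"
proof -
  interpret prob_space "gauss2 v \<sigma>"
    using assms(1) by (rule prob_space_gauss2)
  have "U \<notin> null_sets (gauss2 v \<sigma>)"
  proof
    assume "U \<in> null_sets (gauss2 v \<sigma>)"
    then have "AE w in lborel. w \<notin> U"
      using assms(1) unfolding gauss2_radial
      by (subst (asm) null_sets_density_iff) (auto elim!: eventually_mono)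
    then show False
      using open_not_null_sets_lborel[OF assms(2,3)] assms(2) by (simp add: AE_iff_null_sets)
  qed
  then show ?thesis
    using assms(2) by (simp add: null_sets_def emeasure_eq_measure less_le sets_gauss2)
qed

lemma lborel_distr_rigid_motion:
  fixes f :: "real^'n::{finite,wellorder} \<Rightarrow> real^'n::_"
  assumes f: "orthogonal_transformation f"
  shows "distr lborel borel (\<lambda>w. c + f (w - c)) = lborel"
proof -
  have f_borel: "f \<in> borel_measurable borel"
    using f by (rule orthogonal_transformation_borel_measurable)
  have "lborel = distr (distr (distr lborel borel ((+) (- c))) borel f) borel ((+) c)"
    by (simp only: lborel_distr_plus lborel_distr_orthogonal_transformation[OF f])
  also have "\<dots> = distr lborel borel ((+) c \<circ> (f \<circ> (+) (- c)))"
    using f_borel by (simp add: distr_distr)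
  also have "(+) c \<circ> (f \<circ> (+) (- c)) = (\<lambda>w. c + f (w - c))"
    by (simp add: fun_eq_iff)
  finally show ?thesis ..
qed

lemma distr_gauss2_rigid_motion:
  assumes f: "orthogonal_transformation f"
  shows "distr (gauss2 v \<sigma>) borel (\<lambda>w. v + f (w - v)) = gauss2 v \<sigma>"
proof (rule measure_eqI)
  define T where "T = (\<lambda>w. v + f (w - v))"
  define p where "p w = ennreal (exp (- (norm (w - v))\<^sup>2 / (2 * \<sigma>\<^sup>2)) / (2 * pi * \<sigma>\<^sup>2))" for w
  have G: "gauss2 v \<sigma> = density lborel p"
    unfolding p_def by (rule gauss2_radial)
  have [measurable]: "f \<in> borel_measurable borel"
    using f by (rule orthogonal_transformation_borel_measurable)
  have T_borel [measurable]: "T \<in> borel_measurable borel"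
    unfolding T_def by measurable
  have p_borel [measurable]: "p \<in> borel_measurable borel"
    unfolding p_def by measurable
  have p_T: "p (T w) = p w" for w
    using f by (simp add: p_def T_def orthogonal_transformation_norm)
  fix A :: "(real^2) set"
  assume "A \<in> sets (distr (gauss2 v \<sigma>) borel (\<lambda>w. v + f (w - v)))"
  then have A [measurable]: "A \<in> sets borel"
    by simp
  have "T -` A \<in> sets borel"
    using measurable_sets_borel[OF T_borel A] .
  then have "emeasure (distr (gauss2 v \<sigma>) borel T) A = (\<integral>\<^sup>+ w. p (T w) * indicator A (T w) \<partial>lborel)"
    by (simp add: G emeasure_distr emeasure_density p_T indicator_vimage[symmetric])
  also have "\<dots> = (\<integral>\<^sup>+ y. p y * indicator A y \<partial>distr lborel borel T)"
    by (simp add: nn_integral_distr)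
  also have "\<dots> = emeasure (gauss2 v \<sigma>) A"
    using lborel_distr_rigid_motion[OF f, of v] by (simp add: G T_def emeasure_density)
  finally show "emeasure (distr (gauss2 v \<sigma>) borel (\<lambda>w. v + f (w - v))) A = emeasure (gauss2 v \<sigma>) A"
    by (simp add: T_def)
qed (simp add: sets_gauss2)

lemma measure_gauss2_halfplane_shift:
  fixes u1 u2 :: "real^2"
  assumes "norm u1 = norm u2"
  shows "measure (gauss2 v \<sigma>) {w. u2 \<bullet> w \<le> 0} = measure (gauss2 v \<sigma>) {w. u1 \<bullet> w \<le> u1 \<bullet> v - u2 \<bullet> v}"
proof -
  obtain f where f: "orthogonal_transformation f" "f u1 = u2"
    using orthogonal_transformation_exists[OF assms] by blast
  define T where "T = (\<lambda>w. v + f (w - v))"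
  have "u2 \<bullet> f y = u1 \<bullet> y" for y
    using f unfolding orthogonal_transformation_def by metis
  then have "T -` {w. u2 \<bullet> w \<le> 0} = {w. u1 \<bullet> w \<le> u1 \<bullet> v - u2 \<bullet> v}"
    by (auto simp: T_def inner_add_right inner_diff_right)
  moreover have "T \<in> gauss2 v \<sigma> \<rightarrow>\<^sub>M borel"
    using orthogonal_transformation_borel_measurable[OF f(1)] by (simp add: T_def cong: measurable_cong_sets)
  moreover have "{w. u2 \<bullet> w \<le> 0} \<in> sets borel"
    by measurable
  ultimately show ?thesis
    using measure_distr[of T "gauss2 v \<sigma>" borel "{w. u2 \<bullet> w \<le> 0}"]
    by (simp add: T_def distr_gauss2_rigid_motion[OF f(1)] space_gauss2)
qed

lemma measure_gauss2_halfplane_strict_mono: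
  assumes "0 < \<sigma>" and u: "norm u1 = 1" "norm u2 = 1" and less: "u1 \<bullet> v < u2 \<bullet> v"
  shows "measure (gauss2 v \<sigma>) {w. u2 \<bullet> w \<le> 0} < measure (gauss2 v \<sigma>) {w. u1 \<bullet> w \<le> 0}"
proof -
  interpret prob_space "gauss2 v \<sigma>"
    using assms(1) by (rule prob_space_gauss2)
  define \<delta> where "\<delta> = u2 \<bullet> v - u1 \<bullet> v"
  define U where "U = {w. - \<delta> < u1 \<bullet> w \<and> u1 \<bullet> w < 0}"
  have \<delta>: "0 < \<delta>"
    using less by (simp add: \<delta>_def)
  have U_open: "open U"
    unfolding U_def by (intro open_Collect_conj open_Collect_less continuous_intros)
  have "(- (\<delta> / 2)) *\<^sub>R u1 \<in> U"
    using \<delta> u(1) by (simp add: U_def dot_square_norm)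
  then have U_pos: "0 < prob U"
    using U_open assms(1) by (intro measure_gauss2_open_pos) auto
  have "prob {w. u2 \<bullet> w \<le> 0} = prob {w. u1 \<bullet> w \<le> - \<delta>}"
    using measure_gauss2_halfplane_shift[of u1 u2 v \<sigma>] u by (simp add: \<delta>_def)
  also have "\<dots> + prob U = prob ({w. u1 \<bullet> w \<le> - \<delta>} \<union> U)"
    using U_open by (intro finite_measure_Union[symmetric]) (auto simp: sets_gauss2 U_def)
  also have "\<dots> \<le> prob {w. u1 \<bullet> w \<le> 0}"
    using \<delta> by (intro finite_measure_mono) (auto simp: sets_gauss2 U_def)
  finally show ?thesis
    using U_pos by linarith
qed

lemma measure_gauss2_halfplane_less_iff:
  assumes "0 < \<sigma>" "norm u1 = 1" "norm u2 = 1"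
  shows "measure (gauss2 v \<sigma>) {w. u2 \<bullet> w \<le> 0} < measure (gauss2 v \<sigma>) {w. u1 \<bullet> w \<le> 0}
    \<longleftrightarrow> u1 \<bullet> v < u2 \<bullet> v"
proof -
  consider "u1 \<bullet> v < u2 \<bullet> v" | "u1 \<bullet> v = u2 \<bullet> v" | "u2 \<bullet> v < u1 \<bullet> v"
    by linarith
  then show ?thesis
  proof cases
    case 2
    then show ?thesis
      using measure_gauss2_halfplane_shift[of u1 u2 v \<sigma>] assms by simp
  qed (use measure_gauss2_halfplane_strict_mono assms in force)+
qed

section \<open>Misclassification probability\<close>

lemma mis_prob_zero: "mis_prob v \<sigma> 0 = 0"
  by (simp add: mis_prob_def hyp_def)

lemma mis_prob_orthogonal:
  assumes "0 < \<sigma>" "x \<noteq> 0" "x \<bullet> v = 0"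
  shows "mis_prob v \<sigma> x = 1"
proof -
  interpret prob_space "gauss2 v \<sigma>"
    using assms(1) by (rule prob_space_gauss2)
  have "{w. hyp w x \<noteq> hyp v x} = space (gauss2 v \<sigma>) - {w. w \<bullet> x = 0}"
    using assms(3) by (auto simp: hyp_def space_gauss2 sgn_eq_0_iff inner_commute)
  moreover have "{w. w \<bullet> x = 0} \<in> null_sets (gauss2 v \<sigma>)"
    using assms(2) by (intro gauss2_null_sets hyperplane_null_sets_lborel)
  ultimately show ?thesis
    using measure_Diff_null_set[of "space (gauss2 v \<sigma>)" "gauss2 v \<sigma>" "{w. w \<bullet> x = 0}"] prob_space
    by (simp only: mis_prob_def sets.top)
qed

lemma mis_prob_pos:
  assumes "0 < \<sigma>" "x \<noteq> 0"
  shows "0 < mis_prob v \<sigma> x"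
proof -
  interpret prob_space "gauss2 v \<sigma>"
    using assms(1) by (rule prob_space_gauss2)
  define s where "s = (if 0 < x \<bullet> v then - 1 else 1 :: real)"
  define U where "U = {w. 0 < s * (x \<bullet> w)}"
  have "open U"
    unfolding U_def by (intro open_Collect_less continuous_intros)
  moreover have "s *\<^sub>R x \<in> U"
    using assms(2) by (simp add: U_def s_def)
  ultimately have "0 < prob U"
    using assms(1) by (intro measure_gauss2_open_pos) auto
  also have "\<dots> \<le> mis_prob v \<sigma> x"
    unfolding mis_prob_def using \<open>open U\<close>
    by (intro finite_measure_mono)
      (auto simp: U_def s_def hyp_def sgn_real_def inner_commute sets_gauss2 split: if_splits)
  finally show ?thesis .
qed

lemma mis_prob_less_1:
  assumes "0 < \<sigma>" "x \<bullet> v \<noteq> 0"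
  shows "mis_prob v \<sigma> x < 1"
proof -
  interpret prob_space "gauss2 v \<sigma>"
    using assms(1) by (rule prob_space_gauss2)
  define U where "U = {w. 0 < (x \<bullet> w) * (x \<bullet> v)}"
  have "open U"
    unfolding U_def by (intro open_Collect_less continuous_intros)
  moreover have "v \<in> U"
    using assms(2) by (auto simp: U_def zero_less_mult_iff linorder_neq_iff)
  ultimately have "0 < prob U"
    using assms(1) by (intro measure_gauss2_open_pos) auto
  have "mis_prob v \<sigma> x \<le> prob (space (gauss2 v \<sigma>) - U)"
    unfolding mis_prob_def using \<open>open U\<close>
    by (intro finite_measure_mono)
      (auto simp: U_def hyp_def space_gauss2 sets_gauss2 inner_commute sgn_real_def zero_less_mult_iff)
  also have "\<dots> = 1 - prob U"
    using \<open>open U\<close> by (intro prob_compl) (simp add: sets_gauss2)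
  finally show ?thesis
    using \<open>0 < prob U\<close> by linarith
qed

lemma mis_prob_halfplane:
  assumes "x \<bullet> v \<noteq> 0"
  obtains u where "norm u = 1" "u \<bullet> v = \<bar>x \<bullet> v\<bar> / norm x"
    "mis_prob v \<sigma> x = measure (gauss2 v \<sigma>) {w. u \<bullet> w \<le> 0}"
proof
  define u where "u = sgn (x \<bullet> v) *\<^sub>R sgn x"
  have x: "x \<noteq> 0"
    using assms by auto
  show "norm u = 1"
    using assms x by (simp add: u_def norm_sgn abs_sgn_eq)
  have u_inner: "u \<bullet> w = sgn (x \<bullet> v) * (x \<bullet> w) / norm x" for w
    by (simp add: u_def sgn_div_norm inner_commute field_simps)
  show "u \<bullet> v = \<bar>x \<bullet> v\<bar> / norm x"
    by (simp add: u_inner sgn_real_def)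
  have "hyp w x \<noteq> hyp v x \<longleftrightarrow> u \<bullet> w \<le> 0" for w
    using assms x by (auto simp: u_inner hyp_def inner_commute sgn_real_def divide_le_0_iff split: if_splits)
  then show "mis_prob v \<sigma> x = measure (gauss2 v \<sigma>) {w. u \<bullet> w \<le> 0}"
    by (simp add: mis_prob_def)
qed

lemma mis_prob_less_iff:
  assumes "0 < \<sigma>" "x \<noteq> 0" "y \<noteq> 0"
  shows "mis_prob v \<sigma> y < mis_prob v \<sigma> x \<longleftrightarrow> \<bar>x \<bullet> v\<bar> / norm x < \<bar>y \<bullet> v\<bar> / norm y"
proof (cases "x \<bullet> v = 0 \<or> y \<bullet> v = 0")
  case True
  then consider "x \<bullet> v = 0" "y \<bullet> v = 0" | "x \<bullet> v = 0" "y \<bullet> v \<noteq> 0" | "x \<bullet> v \<noteq> 0" "y \<bullet> v = 0"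
    by blast
  then show ?thesis
  proof cases
    case 1
    then show ?thesis
      using mis_prob_orthogonal[OF assms(1)] assms(2,3) by simp
  next
    case 2
    then show ?thesis
      using mis_prob_orthogonal[OF assms(1,2)] mis_prob_less_1[OF assms(1)] assms(3) by simp
  next
    case 3
    have "mis_prob v \<sigma> x \<le> 1"
      unfolding mis_prob_def using prob_space_gauss2[OF assms(1)] by (rule prob_space.prob_le_1)
    then show ?thesis
      using 3 mis_prob_orthogonal[OF assms(1,3)] by (simp add: not_less)
  qed
next
  case False
  obtain ux where ux: "norm ux = 1" "ux \<bullet> v = \<bar>x \<bullet> v\<bar> / norm x"
    "mis_prob v \<sigma> x = measure (gauss2 v \<sigma>) {w. ux \<bullet> w \<le> 0}"
    using False mis_prob_halfplane by blast
  obtain uy where uy: "norm uy = 1" "uy \<bullet> v = \<bar>y \<bullet> v\<bar> / norm y"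
    "mis_prob v \<sigma> y = measure (gauss2 v \<sigma>) {w. uy \<bullet> w \<le> 0}"
    using False mis_prob_halfplane by blast
  show ?thesis
    using measure_gauss2_halfplane_less_iff[OF assms(1) ux(1) uy(1)] ux uy by simp
qed

section \<open>The least disagree metric\<close>

lemma LDM_hyp: "LDM (hyp v) x = (INF w\<in>{w. hyp w x \<noteq> hyp v x}. ereal (rho (hyp w) (hyp v)))"
proof -
  have "{h \<in> Hclass. h x \<noteq> hyp v x} = hyp ` {w. hyp w x \<noteq> hyp v x}"
    unfolding Hclass_def by auto
  then show ?thesis
    unfolding LDM_def by (simp add: image_image)
qed

lemma LDM_hyp_zero: "LDM (hyp v) 0 = \<infinity>"
  unfolding LDM_hyp by (simp add: hyp_def top_ereal_def)

lemma LDM_hyp_less_top: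
  assumes "x \<noteq> 0"
  shows "LDM (hyp v) x < \<infinity>"
proof -
  define w where "w = (if 0 < x \<bullet> v then - x else x)"
  have "0 < x \<bullet> x" "\<not> x \<bullet> x < 0"
    using assms by (simp_all add: leD)
  then have "hyp w x \<noteq> hyp v x"
    unfolding w_def hyp_def by (cases "0 < x \<bullet> v") (simp_all add: inner_commute sgn_real_def)
  then have "LDM (hyp v) x \<le> ereal (rho (hyp w) (hyp v))"
    unfolding LDM_hyp by (intro INF_lower) simp
  also have "\<dots> < \<infinity>"
    by simp
  finally show ?thesis .
qed

lemma LDM_zero_hyp:
  assumes "x \<noteq> 0"
  shows "LDM (hyp 0) x = 1"
proof -
  have "{w. hyp w x \<noteq> hyp 0 x} = {w. x \<bullet> w \<noteq> 0}"
    by (auto simp: hyp_def sgn_eq_0_iff)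
  moreover have "rho (hyp w) (hyp 0) = 1" if "x \<bullet> w \<noteq> 0" for w
    using that by (intro rho_hyp_zero) auto
  moreover have "x \<in> {w. x \<bullet> w \<noteq> 0}"
    using assms by simp
  ultimately show ?thesis
    unfolding LDM_hyp by (subst INF_cong[OF refl, of _ _ "\<lambda>_. 1"]) (auto simp: INF_constant)
qed

lemma hyp_disagree_inner_le:
  assumes w: "norm w = 1" and disagree: "hyp w x \<noteq> hyp v x"
  shows "w \<bullet> v \<le> \<bar>perp (sgn x) \<bullet> v\<bar>"
proof -
  define f where "f = sgn x"
  have "x \<noteq> 0"
    using disagree by (auto simp: hyp_def)
  then have f: "norm f = 1"
    by (simp add: f_def norm_sgn)
  have "sgn (x \<bullet> u) = sgn (f \<bullet> u)" for u
  proof -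
    have "x \<bullet> u = norm x * (f \<bullet> u)"
      using \<open>x \<noteq> 0\<close> by (simp add: f_def sgn_div_norm)
    then show ?thesis
      using \<open>x \<noteq> 0\<close> by (simp add: sgn_mult)
  qed
  then have "sgn (f \<bullet> w) \<noteq> sgn (f \<bullet> v)"
    using disagree by (simp add: hyp_def)
  then have "(w \<bullet> f) * (v \<bullet> f) \<le> 0"
    by (auto simp: inner_commute sgn_real_def mult_le_0_iff split: if_splits)
  moreover have "(w \<bullet> perp f) * (v \<bullet> perp f) \<le> \<bar>perp f \<bullet> v\<bar>"
  proof -
    have "\<bar>w \<bullet> perp f\<bar> \<le> 1"
      using Cauchy_Schwarz_ineq2[of w "perp f"] w f by simp
    have "(w \<bullet> perp f) * (v \<bullet> perp f) \<le> \<bar>w \<bullet> perp f\<bar> * \<bar>v \<bullet> perp f\<bar>"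
      by (simp flip: abs_mult)
    also have "\<dots> \<le> \<bar>v \<bullet> perp f\<bar>"
      using \<open>\<bar>w \<bullet> perp f\<bar> \<le> 1\<close> by (simp add: mult_left_le_one_le)
    finally show ?thesis
      by (simp add: inner_commute)
  qed
  ultimately show ?thesis
    using inner_decompose_perp[OF f, of w v] by (simp add: f_def)
qed

lemma LDM_hyp_eq_rho:
  assumes xv: "x \<bullet> v \<noteq> 0"
  obtains q where "norm q = 1" "q \<bullet> v = sqrt ((norm v)\<^sup>2 - (\<bar>x \<bullet> v\<bar> / norm x)\<^sup>2)"
    "LDM (hyp v) x = ereal (rho (hyp q) (hyp v))"
proof
  define f where "f = sgn x"
  define q where "q = (if perp f \<bullet> v < 0 then - perp f else perp f)"
  have "x \<noteq> 0" "v \<noteq> 0"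
    using xv by auto
  then have f: "norm f = 1"
    by (simp add: f_def norm_sgn)
  have x: "x = norm x *\<^sub>R f"
    using \<open>x \<noteq> 0\<close> by (simp add: f_def sgn_div_norm)
  show q: "norm q = 1"
    using f by (simp add: q_def)
  have qv: "q \<bullet> v = \<bar>perp f \<bullet> v\<bar>"
    by (simp add: q_def)
  also have "\<dots> = sqrt ((perp f \<bullet> v)\<^sup>2)"
    by simp
  also have "(perp f \<bullet> v)\<^sup>2 = (norm v)\<^sup>2 - (\<bar>x \<bullet> v\<bar> / norm x)\<^sup>2"
  proof -
    have "\<bar>x \<bullet> v\<bar> / norm x = \<bar>v \<bullet> f\<bar>"
      by (simp add: f_def sgn_div_norm inner_commute abs_mult divide_inverse mult.commute)
    then show ?thesis
      using norm_decompose_perp[OF f, of v] by (simp add: inner_commute)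
  qed
  finally show "q \<bullet> v = sqrt ((norm v)\<^sup>2 - (\<bar>x \<bullet> v\<bar> / norm x)\<^sup>2)" .
  have "hyp q x = 0"
    by (subst x) (simp add: hyp_def q_def)
  then have feasible: "hyp q x \<noteq> hyp v x"
    using xv by (simp add: hyp_def inner_commute sgn_eq_0_iff)
  have minimal: "rho (hyp q) (hyp v) \<le> rho (hyp w) (hyp v)" if "hyp w x \<noteq> hyp v x" for w
  proof (cases "w = 0")
    case True
    then show ?thesis
      using rho_hyp_zero(2)[OF \<open>v \<noteq> 0\<close>] rho_hyp_le_1 by simp
  next
    case False
    then have "sgn w \<bullet> v \<le> q \<bullet> v"
      using hyp_disagree_inner_le[of "sgn w" x v] that qv by (simp add: norm_sgn hyp_sgn f_def)
    then show ?thesis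
      using rho_hyp_less_iff[OF _ q, of "sgn w" v] False by (simp add: norm_sgn hyp_sgn not_less)
  qed
  show "LDM (hyp v) x = ereal (rho (hyp q) (hyp v))"
    unfolding LDM_hyp
  proof (rule antisym)
    show "(INF w\<in>{w. hyp w x \<noteq> hyp v x}. ereal (rho (hyp w) (hyp v))) \<le> ereal (rho (hyp q) (hyp v))"
      using feasible by (intro INF_lower) simp
    show "ereal (rho (hyp q) (hyp v)) \<le> (INF w\<in>{w. hyp w x \<noteq> hyp v x}. ereal (rho (hyp w) (hyp v)))"
      using minimal by (intro INF_greatest) simp
  qed
qed

lemma LDM_hyp_orthogonal_eq:
  assumes "v \<noteq> 0" "x \<noteq> 0" "y \<noteq> 0" "x \<bullet> v = 0" "y \<bullet> v = 0"
  shows "LDM (hyp v) x = LDM (hyp v) y"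
proof -
  define p where "p = perp (sgn v)"
  have e: "norm (sgn v) = 1"
    using assms(1) by (simp add: norm_sgn)
  have disagree: "hyp w z \<noteq> hyp v z \<longleftrightarrow> w \<bullet> p \<noteq> 0" if "z \<noteq> 0" "z \<bullet> v = 0" for z w
  proof -
    have "z \<bullet> sgn v = 0"
      using that(2) by (simp add: sgn_div_norm)
    then have z: "z \<bullet> u = (z \<bullet> p) * (u \<bullet> p)" for u
      using inner_decompose_perp[OF e, of z u] by (simp add: p_def)
    have "z \<bullet> p \<noteq> 0"
      using z[of z] that(1) by auto
    then show ?thesis
      using that(2) z[of w] by (simp add: hyp_def inner_commute sgn_eq_0_iff)
  qed
  have "{w. hyp w x \<noteq> hyp v x} = {w. hyp w y \<noteq> hyp v y}"
    using disagree assms by auto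
  then show ?thesis
    by (simp add: LDM_hyp)
qed

lemma LDM_hyp_orthogonal_less:
  assumes x: "x \<noteq> 0" "x \<bullet> v = 0" and q: "norm q = 1" "q \<bullet> v < norm v"
  shows "LDM (hyp v) x < ereal (rho (hyp q) (hyp v))"
proof -
  define e where "e = sgn v"
  define f where "f = sgn x"
  have "v \<noteq> 0"
    using q(2) by auto
  have ee: "e \<bullet> e = 1" and ff: "f \<bullet> f = 1"
    using x \<open>v \<noteq> 0\<close> by (simp_all add: e_def f_def dot_square_norm norm_sgn)
  have ef: "e \<bullet> f = 0" "f \<bullet> e = 0"
    using x by (simp_all add: e_def f_def sgn_div_norm inner_commute)
  have v: "v = norm v *\<^sub>R e" and x_eq: "x = norm x *\<^sub>R f"
    using x(1) \<open>v \<noteq> 0\<close> by (simp_all add: e_def f_def sgn_div_norm)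
  have "\<bar>q \<bullet> e\<bar> \<le> 1"
    using Cauchy_Schwarz_ineq2[of q e] q(1) \<open>v \<noteq> 0\<close> by (simp add: e_def norm_sgn)
  moreover have "q \<bullet> e < 1"
    using q(2) \<open>v \<noteq> 0\<close> by (subst (asm) v) simp
  ultimately obtain c where c: "q \<bullet> e < c" "0 \<le> c" "c < 1"
    by (intro that[of "(1 + q \<bullet> e) / 2"]) auto
  define s where "s = sqrt (1 - c\<^sup>2)"
  have "c\<^sup>2 < 1"
    using c by (simp add: power_less_one_iff abs_less_iff)
  then have s: "0 < s" "s\<^sup>2 = 1 - c\<^sup>2"
    by (simp_all add: s_def)
  define w where "w = c *\<^sub>R e + s *\<^sub>R f"
  have "w \<bullet> w = 1"
    using ee ff ef s(2) by (simp add: w_def inner_add_left inner_add_right power2_eq_square)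
  then have w: "norm w = 1"
    by (simp add: norm_eq_sqrt_inner)
  have "x \<bullet> w = norm x * s"
    using ee ff ef by (subst x_eq) (simp add: w_def inner_add_right)
  then have "hyp w x \<noteq> hyp v x"
    using x s(1) by (simp add: hyp_def inner_commute sgn_eq_0_iff)
  then have "LDM (hyp v) x \<le> ereal (rho (hyp w) (hyp v))"
    unfolding LDM_hyp by (intro INF_lower) simp
  also have "q \<bullet> v < w \<bullet> v"
    using c(1) \<open>v \<noteq> 0\<close> ee ef by (subst (1 2) v) (simp add: w_def inner_add_left)
  then have "ereal (rho (hyp w) (hyp v)) < ereal (rho (hyp q) (hyp v))"
    using rho_hyp_less_iff[OF w q(1)] by simp
  finally show ?thesis .
qed

lemma LDM_hyp_less_iff:
  assumes "x \<noteq> 0" "y \<noteq> 0"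
  shows "LDM (hyp v) x < LDM (hyp v) y \<longleftrightarrow> \<bar>x \<bullet> v\<bar> / norm x < \<bar>y \<bullet> v\<bar> / norm y"
proof (cases "v = 0")
  case True
  then show ?thesis
    using LDM_zero_hyp assms by simp
next
  case False
  have sqrt_less: "sqrt ((norm v)\<^sup>2 - a\<^sup>2) < sqrt ((norm v)\<^sup>2 - b\<^sup>2) \<longleftrightarrow> b < a"
    if "0 \<le> a" "0 \<le> b" for a b :: real
  proof -
    have "sqrt ((norm v)\<^sup>2 - a\<^sup>2) < sqrt ((norm v)\<^sup>2 - b\<^sup>2) \<longleftrightarrow> \<not> a\<^sup>2 \<le> b\<^sup>2"
      by (simp add: not_le)
    also have "\<dots> \<longleftrightarrow> b < a"
      using power_mono_iff[OF that, of 2] by (simp add: not_le)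
    finally show ?thesis .
  qed
  have orthogonal_less: "LDM (hyp v) z < LDM (hyp v) y"
    if z: "z \<noteq> 0" "z \<bullet> v = 0" and y: "y \<bullet> v \<noteq> 0" for z y
  proof -
    obtain q where q: "norm q = 1" "q \<bullet> v = sqrt ((norm v)\<^sup>2 - (\<bar>y \<bullet> v\<bar> / norm y)\<^sup>2)"
      "LDM (hyp v) y = ereal (rho (hyp q) (hyp v))"
      using LDM_hyp_eq_rho[OF y] by blast
    have "q \<bullet> v < sqrt ((norm v)\<^sup>2 - 0\<^sup>2)"
    proof -
      have "y \<noteq> 0"
        using y by auto
      then show ?thesis
        unfolding q(2) using y by (subst sqrt_less) auto
    qed
    then show ?thesis
      using LDM_hyp_orthogonal_less[OF z q(1)] q(3) by simp
  qed
  consider "x \<bullet> v = 0" "y \<bullet> v = 0" | "x \<bullet> v = 0" "y \<bullet> v \<noteq> 0" | "x \<bullet> v \<noteq> 0" "y \<bullet> v = 0"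
    | "x \<bullet> v \<noteq> 0" "y \<bullet> v \<noteq> 0"
    by blast
  then show ?thesis
  proof cases
    case 1
    then show ?thesis
      using LDM_hyp_orthogonal_eq[OF False assms] by simp
  next
    case 2
    then show ?thesis
      using orthogonal_less[of x y] assms by simp
  next
    case 3
    then have "LDM (hyp v) y < LDM (hyp v) x"
      using orthogonal_less[of y x] assms(2) by simp
    moreover have "0 \<le> \<bar>x \<bullet> v\<bar> / norm x"
      by simp
    ultimately show ?thesis
      using 3 by (simp add: less_asym leD)
  next
    case 4
    obtain qx where qx: "norm qx = 1" "qx \<bullet> v = sqrt ((norm v)\<^sup>2 - (\<bar>x \<bullet> v\<bar> / norm x)\<^sup>2)"
      "LDM (hyp v) x = ereal (rho (hyp qx) (hyp v))"
      using LDM_hyp_eq_rho[OF 4(1)] by blast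
    obtain qy where qy: "norm qy = 1" "qy \<bullet> v = sqrt ((norm v)\<^sup>2 - (\<bar>y \<bullet> v\<bar> / norm y)\<^sup>2)"
      "LDM (hyp v) y = ereal (rho (hyp qy) (hyp v))"
      using LDM_hyp_eq_rho[OF 4(2)] by blast
    show ?thesis
      using rho_hyp_less_iff[OF qx(1) qy(1), of v] qx qy
        sqrt_less[of "\<bar>y \<bullet> v\<bar> / norm y" "\<bar>x \<bullet> v\<bar> / norm x"]
      by simp
  qed
qed

theorem proposition1:
  fixes v x1 x2 :: "real^2" and \<sigma> :: real
  assumes "\<sigma> > 0" and "x1 \<in> disk" and "x2 \<in> disk"
  shows "LDM (hyp v) x1 < LDM (hyp v) x2 \<longleftrightarrow> mis_prob v \<sigma> x1 > mis_prob v \<sigma> x2"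
proof -
  consider "x1 = 0" | "x1 \<noteq> 0" "x2 = 0" | "x1 \<noteq> 0" "x2 \<noteq> 0"
    by blast
  then show ?thesis
  proof cases
    case 1
    have "0 \<le> mis_prob v \<sigma> x2"
      by (simp add: mis_prob_def)
    then show ?thesis
      using 1 by (simp add: LDM_hyp_zero mis_prob_zero not_less)
  next
    case 2
    then show ?thesis
      using LDM_hyp_less_top mis_prob_pos[OF assms(1)] by (simp add: LDM_hyp_zero mis_prob_zero)
  next
    case 3
    then show ?thesis
      using LDM_hyp_less_iff mis_prob_less_iff[OF assms(1)] by simp
  qed
qed

end
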